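(* Let $\mathbb{T}(n,p)$ denote the expected number of explored nodes of the branch-and-bound algorithm for minimum dominating set described in the context, run on $G\sim\mathcal{G}(n,p)$. Then: (a) If $p=p(n)$ satisfies $pn\to\infty$ as $n\to\infty$, then $\mathbb{T}(n,p)=2^{o(n)}$ (the algorithm takes subexponential time on average). (b) If $p=c/n$ where $c\ge 20$ is a constant, then there is a constant $\epsilon\ge 0.01$ (independent of $n$) such that $\mathbb{T}(n,p)\le (2-\epsilon)^n$ for all sufficiently large $n$.
   Context: $\mathcal{G}(n,p)$ is the binomial random graph on vertex set $V=\{v_1,\dots,v_n\}$ in which each of the $\binom n2$ possible edges is present independently with probability $p$. A set $S\subseteq V$ is dominating if every vertex is in $S$ or adjacent to a vertex of $S$. Branch-and-bound algorithm: fix the order $v_1,\dots,v_n$. Nodes of the search tree are pairs $(\vec x,\delta)$ with $\delta\in\{0,\dots,n\}$ and $\vec x\in\{0,1\}^n$ with $x_i=1$ for all $i>\delta$; the node represents the vertex set $\{v_i: x_i=1\}$. The root is $((1,\dots,1),0)$. A node $(\vec x,\delta)$ with $\delta<n$ has a left child $(\vec x,\delta+1)$ (i.e. $x_{\delta+1}=1$, vertex $v_{\delta+1}$ kept) and a right child $(\vec x',\delta+1)$ where $\vec x'$ equals $\vec x$ except $x'_{\delta+1}=0$ (vertex $v_{\delta+1}$ removed). A node is feasible if its vertex set is a dominating set of $G$. The score of a node is $u(\vec x,\delta)=|\vec x|-n+\delta$, where $|\vec x|=\sum_i x_i$; equivalently, the number of indices $i\le\delta$ with $x_i=1$. Initially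 the root is explored. At each step, among the feasible nodes that are children of already-explored nodes and have not yet been explored, one with minimum score is explored (ties broken arbitrarily). The algorithm stops as soon as a node of depth $\delta=n$ is explored; its vertex set is returned as a minimum dominating set. The complexity is the number of explored nodes. *)

theory Defs
  imports Complex_Main "HOL-Library.Landau_Symbols"
begin

text \<open>Vertices v_1..v_n are represented by 0..n-1 (v_(i+1) is i).
  A graph on {0..<n} is a set E of 2-element subsets of {0..<n}.\<close>

definition all_pairs :: "nat \<Rightarrow> nat set set" where
  "all_pairs n = {{i, j} | i j. i < j \<and> j < n}"

definition dominating :: "nat \<Rightarrow> nat set set \<Rightarrow> nat set \<Rightarrow> bool" where
  "dominating n E S \<longleftrightarrow> S \<subseteq> {..<n} \<and> (\<forall>v<n. v \<in> S \<or> (\<exists>u\<in>S. {u, v} \<in> E))"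

text \<open>A node (S, d): S is the represented vertex set (the i with x_(i+1) = 1),
  d is the depth delta.  Vertices with index \<ge> d are always in S.\<close>
type_synonym node = "nat set \<times> nat"

definition root :: "nat \<Rightarrow> node" where
  "root n = ({..<n}, 0)"

definition children :: "nat \<Rightarrow> node \<Rightarrow> node set" where
  "children n a = (if snd a < n then {(fst a, Suc (snd a)), (fst a - {snd a}, Suc (snd a))} else {})"

definition score :: "node \<Rightarrow> nat" where
  "score a = card (fst a \<inter> {..<snd a})"

definition candidates :: "nat \<Rightarrow> nat set set \<Rightarrow> node list \<Rightarrow> node set" where
  "candidates n E xs = {c. (\<exists>a\<in>set xs. c \<in> children n a) \<and> dominating n E (fst c) \<and> c \<notin> set xs}"

text \<open>A complete run of the branch-and-bound algorithm (with some tie-breaking):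
  the list of explored nodes in order of exploration.\<close>
definition valid_run :: "nat \<Rightarrow> nat set set \<Rightarrow> node list \<Rightarrow> bool" where
  "valid_run n E xs \<longleftrightarrow> xs \<noteq> [] \<and> hd xs = root n \<and>
     (\<forall>i. 0 < i \<and> i < length xs \<longrightarrow>
        xs ! i \<in> candidates n E (take i xs) \<and>
        (\<forall>c \<in> candidates n E (take i xs). score (xs ! i) \<le> score c)) \<and>
     snd (last xs) = n \<and>
     (\<forall>i. i + 1 < length xs \<longrightarrow> snd (xs ! i) \<noteq> n)"

definition complexity :: "nat \<Rightarrow> nat set set \<Rightarrow> nat" where
  "complexity n E = Max {length xs | xs. valid_run n E xs}"

definition T :: "nat \<Rightarrow> real \<Rightarrow> real" where
  "T n p = (\<Sum>E \<in> Pow (all_pairs n).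
      p ^ card E * (1 - p) ^ (card (all_pairs n) - card E) * real (complexity n E))"

end

theory Submission
  imports Defs "HOL-Real_Asymp.Real_Asymp"
begin

text \<open>
  Every node explored before the algorithm stops has score at most |D|, for every dominating
  set D: the nodes (D \<union> {d..<n}, d) lead from the root to the leaf (D, n), and the first of
  them that is not yet explored is a feasible candidate of score at most |D|. Explored nodes
  are distinct, and a node is determined by its depth and the vertices it keeps above that
  depth, so at most (n + 1) #{B \<subseteq> V. |B| \<le> |D|} \<le> (n + 1) (1 + x)^n x^-|D| nodes are
  explored, for any 0 < x \<le> 1.

  Take for D the first m vertices together with the later vertices having no neighbour among
  them. Then |D| - m is binomial with parameters n - m and (1 - p)^m, so
  E[x^-|D|] = x^-m (1 + (1/x - 1) (1 - p)^m)^(n-m). If pn \<rightarrow> \<infinity>, the choice m = \<beta>n with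
  \<beta> ln(1/x) = x makes every factor e^O(xn), and x can be taken arbitrarily small. For p = c/n
  with c \<ge> 20, the choice x = 1/4 and m \<approx> n/5 gives T(n, p) \<le> poly(n) (231/125)^n.
\<close>

section \<open>Runs of the branch-and-bound algorithm\<close>

definition partial_run :: "nat \<Rightarrow> nat set set \<Rightarrow> node list \<Rightarrow> bool" where
  "partial_run n E xs \<longleftrightarrow> xs \<noteq> [] \<and> hd xs = root n \<and>
     (\<forall>i. 0 < i \<and> i < length xs \<longrightarrow>
        xs ! i \<in> candidates n E (take i xs) \<and>
        (\<forall>c \<in> candidates n E (take i xs). score (xs ! i) \<le> score c)) \<and>
     (\<forall>i. i + 1 < length xs \<longrightarrow> snd (xs ! i) \<noteq> n)"

lemma valid_run_iff_partial_run: "valid_run n E xs \<longleftrightarrow> partial_run n E xs \<and> snd (last xs) = n"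
  unfolding valid_run_def partial_run_def by blast

definition node_wf :: "nat \<Rightarrow> node \<Rightarrow> bool" where
  "node_wf n a \<longleftrightarrow> snd a \<le> n \<and> {snd a..<n} \<subseteq> fst a \<and> fst a \<subseteq> {..<n}"

lemma dominating_mono:
  "dominating n E D \<Longrightarrow> D \<subseteq> S \<Longrightarrow> S \<subseteq> {..<n} \<Longrightarrow> dominating n E S"
  unfolding dominating_def by blast

lemma dominating_lessThan: "dominating n E {..<n}"
  unfolding dominating_def by auto

lemma node_wf_children: "node_wf n a \<Longrightarrow> c \<in> children n a \<Longrightarrow> node_wf n c"
  unfolding node_wf_def children_def by (auto split: if_splits simp: subset_iff)

lemma exists_crossing_step:
  assumes "Q (0::nat)" "\<not> Q n"
  shows "\<exists>d<n. Q d \<and> \<not> Q (Suc d)"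
  using assms by (induction n) (auto intro: less_SucI)

lemma candidate_score_le_dominating:
  assumes "root n \<in> set ys" "(D, n) \<notin> set ys" "dominating n E D"
  shows "\<exists>c\<in>candidates n E ys. score c \<le> card D"
proof -
  define path where "path d = (D \<union> {d..<n}, d)" for d
  have D: "D \<subseteq> {..<n}" using assms(3) unfolding dominating_def by auto
  have "D \<union> {0..<n} = {..<n}" using D by auto
  then have "path 0 \<in> set ys" "path n \<notin> set ys"
    using assms(1,2) unfolding path_def root_def by auto
  then obtain d where d: "d < n" "path d \<in> set ys" "path (Suc d) \<notin> set ys"
    using exists_crossing_step[of "\<lambda>d. path d \<in> set ys" n] by blast
  have "D \<union> {Suc d..<n} = (if d \<in> D then D \<union> {d..<n} else D \<union> {d..<n} - {d})"
    using d(1) by (auto, metis le_antisym not_less_eq_eq)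
  then have "path (Suc d) \<in> children n (path d)"
    unfolding path_def children_def using d(1) by auto
  moreover have "dominating n E (fst (path (Suc d)))"
    unfolding path_def by (rule dominating_mono[OF assms(3)]) (use D in auto)
  ultimately have "path (Suc d) \<in> candidates n E ys"
    unfolding candidates_def using d by blast
  moreover have "score (path (Suc d)) \<le> card D"
  proof -
    have "fst (path (Suc d)) \<inter> {..<snd (path (Suc d))} = D \<inter> {..<Suc d}"
      unfolding path_def by auto
    then show ?thesis
      unfolding score_def using D by (simp add: card_mono finite_subset)
  qed
  ultimately show ?thesis by blast
qed

lemma partial_run_nth_0: "partial_run n E xs \<Longrightarrow> xs ! 0 = root n"
  unfolding partial_run_def by (metis hd_conv_nth)

lemma partial_run_node_wf:
  assumes "partial_run n E xs"
  shows "i < length xs \<Longrightarrow> node_wf n (xs ! i)"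
proof (induction i rule: less_induct)
  case (less i)
  show ?case
  proof (cases "i = 0")
    case True
    then show ?thesis
      using partial_run_nth_0[OF assms] unfolding node_wf_def root_def by auto
  next
    case False
    then have "xs ! i \<in> candidates n E (take i xs)"
      using assms less.prems unfolding partial_run_def by auto
    then obtain j where "j < i" "xs ! i \<in> children n (xs ! j)"
      unfolding candidates_def by (auto simp: in_set_conv_nth)
    then show ?thesis using less node_wf_children by (meson order.strict_trans)
  qed
qed

lemma partial_run_score_le:
  assumes run: "partial_run n E xs" and "dominating n E D" and i: "i < length xs"
  shows "score (xs ! i) \<le> card D"
proof (cases "i = 0")
  case True
  then show ?thesis using partial_run_nth_0[OF run] unfolding score_def root_def by simp
next
  case False
  have "root n \<in> set (take i xs)"
    using partial_run_nth_0[OF run] False i by (metis gr0I length_take min.absorb4 nth_mem nth_take)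
  moreover have "(D, n) \<notin> set (take i xs)"
  proof
    assume "(D, n) \<in> set (take i xs)"
    then obtain j where j: "j < i" "xs ! j = (D, n)" by (auto simp: in_set_conv_nth)
    then have "j + 1 < length xs" using i by simp
    with run j(2) show False unfolding partial_run_def by (metis snd_conv)
  qed
  ultimately obtain c where c: "c \<in> candidates n E (take i xs)" "score c \<le> card D"
    using candidate_score_le_dominating assms(2) by blast
  have "score (xs ! i) \<le> score c"
    using run i False c(1) unfolding partial_run_def by blast
  with c(2) show ?thesis by linarith
qed

lemma distinct_if_nth_notin_take:
  assumes "\<And>i. i < length xs \<Longrightarrow> xs ! i \<notin> set (take i xs)"
  shows "distinct xs"
  unfolding distinct_conv_nth
proof (intro allI impI)
  have "xs ! i \<noteq> xs ! j" if "i < length xs" "j < i" for i j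
    using assms[OF that(1)] that by (metis length_take min.absorb4 nth_mem nth_take)
  then show "xs ! i \<noteq> xs ! j" if "i < length xs" "j < length xs" "i \<noteq> j" for i j
    using that by (metis linorder_neq_iff)
qed

lemma partial_run_distinct:
  assumes "partial_run n E xs"
  shows "distinct xs"
proof (rule distinct_if_nth_notin_take)
  fix i assume "i < length xs"
  show "xs ! i \<notin> set (take i xs)"
  proof (cases "i = 0")
    case False
    then have "xs ! i \<in> candidates n E (take i xs)"
      using assms \<open>i < length xs\<close> unfolding partial_run_def by blast
    then show ?thesis unfolding candidates_def by blast
  qed simp
qed

lemma partial_run_length_le:
  assumes run: "partial_run n E xs" and dom: "dominating n E D"
  shows "length xs \<le> (n + 1) * card {B. B \<subseteq> {..<n} \<and> card B \<le> card D}"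
proof -
  define BS where "BS = {B. B \<subseteq> {..<n} \<and> card B \<le> card D}"
  define node_of where "node_of = (\<lambda>(d, B). (B \<union> {d..<n}, d :: nat))"
  have "set xs \<subseteq> node_of ` ({..n} \<times> BS)"
  proof
    fix a assume "a \<in> set xs"
    then obtain i where i: "i < length xs" "a = xs ! i" by (auto simp: in_set_conv_nth)
    obtain S d where a: "a = (S, d)" by fastforce
    have "node_wf n a" "score a \<le> card D"
      using partial_run_node_wf[OF run] partial_run_score_le[OF run dom] i by auto
    then have "(d, S \<inter> {..<d}) \<in> {..n} \<times> BS" "a = node_of (d, S \<inter> {..<d})"
      unfolding a node_wf_def score_def BS_def node_of_def by auto
    then show "a \<in> node_of ` ({..n} \<times> BS)" by blast
  qed
  moreover have fin: "finite ({..n} \<times> BS)" unfolding BS_def by simp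
  ultimately have "card (set xs) \<le> card (node_of ` ({..n} \<times> BS))"
    by (intro card_mono) auto
  also have "\<dots> \<le> card ({..n} \<times> BS)" using fin by (rule card_image_le)
  finally show ?thesis
    using distinct_card[OF partial_run_distinct[OF run]] unfolding BS_def
    by (simp add: card_cartesian_product)
qed

lemma candidates_nonempty:
  assumes run: "partial_run n E xs" and unfinished: "snd (last xs) \<noteq> n"
  shows "candidates n E xs \<noteq> {}"
proof -
  have "xs \<noteq> []" using run unfolding partial_run_def by simp
  moreover from this have "root n \<in> set xs"
    using run hd_in_set unfolding partial_run_def by metis
  moreover have "({..<n}, n) \<notin> set xs"
  proof
    assume "({..<n}, n) \<in> set xs"
    then obtain j where j: "j < length xs" "snd (xs ! j) = n" by (auto simp: in_set_conv_nth)
    show False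
    proof (cases "j + 1 < length xs")
      case True
      with run j(2) show False unfolding partial_run_def by blast
    next
      case False
      with j(1) have "j = length xs - 1" by simp
      with j(2) \<open>xs \<noteq> []\<close> unfinished show False by (simp add: last_conv_nth)
    qed
  qed
  ultimately show ?thesis
    using candidate_score_le_dominating[OF _ _ dominating_lessThan] by blast
qed

lemma partial_run_snoc:
  assumes run: "partial_run n E xs" and unfinished: "snd (last xs) \<noteq> n"
    and c: "c \<in> candidates n E xs" "\<forall>c' \<in> candidates n E xs. score c \<le> score c'"
  shows "partial_run n E (xs @ [c])"
proof -
  have "xs \<noteq> []" using run unfolding partial_run_def by simp
  have "snd ((xs @ [c]) ! i) \<noteq> n" if "i + 1 < length (xs @ [c])" for i
  proof (cases "i + 1 < length xs")
    case True
    then show ?thesis using run unfolding partial_run_def by (simp add: nth_append)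
  next
    case False
    with that have "i = length xs - 1" by simp
    with unfinished \<open>xs \<noteq> []\<close> show ?thesis by (simp add: nth_append last_conv_nth)
  qed
  moreover have "(xs @ [c]) ! i \<in> candidates n E (take i (xs @ [c])) \<and>
      (\<forall>c' \<in> candidates n E (take i (xs @ [c])). score ((xs @ [c]) ! i) \<le> score c')"
    if "0 < i" "i < length (xs @ [c])" for i
    using run c that unfolding partial_run_def
    by (cases "i < length xs") (auto simp: nth_append)
  ultimately show ?thesis using run unfolding partial_run_def by simp
qed

lemma partial_run_extends_to_valid_run:
  "partial_run n E xs \<Longrightarrow> \<exists>ys. valid_run n E ys"
proof (induction "(n + 1) * card {B. B \<subseteq> {..<n} \<and> card B \<le> card {..<n}} - length xs"
    arbitrary: xs rule: less_induct)
  case less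
  show ?case
  proof (cases "snd (last xs) = n")
    case True
    with less.prems show ?thesis using valid_run_iff_partial_run by blast
  next
    case False
    obtain c0 where "c0 \<in> candidates n E xs" using candidates_nonempty[OF less.prems False] by blast
    then obtain c where "c \<in> candidates n E xs" "\<forall>c' \<in> candidates n E xs. score c \<le> score c'"
      using arg_min_nat_lemma[of "\<lambda>c. c \<in> candidates n E xs" c0 score] by blast
    with less.prems False have run: "partial_run n E (xs @ [c])" by (rule partial_run_snoc)
    from partial_run_length_le[OF run dominating_lessThan] show ?thesis
      by (intro less.hyps[OF _ run]) simp
  qed
qed

lemma valid_run_exists: "\<exists>xs. valid_run n E xs"
  by (rule partial_run_extends_to_valid_run[of n E "[root n]"]) (simp add: partial_run_def)

lemma complexity_ge_one: "1 \<le> complexity n E"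
  and complexity_le:
    "dominating n E D \<Longrightarrow> complexity n E \<le> (n + 1) * card {B. B \<subseteq> {..<n} \<and> card B \<le> card D}"
proof -
  define L where "L = {length xs | xs. valid_run n E xs}"
  have le: "l \<le> (n + 1) * card {B. B \<subseteq> {..<n} \<and> card B \<le> card D}"
    if "l \<in> L" "dominating n E D" for l D
    using that partial_run_length_le unfolding L_def valid_run_iff_partial_run by blast
  then have fin: "finite L" by (meson dominating_lessThan finite_nat_set_iff_bounded_le)
  obtain xs where xs: "valid_run n E xs" using valid_run_exists by blast
  then have "length xs \<in> L" "1 \<le> length xs"
    unfolding L_def valid_run_def by (auto simp: Suc_leI)
  moreover have "complexity n E = Max L" unfolding complexity_def L_def ..
  ultimately show "1 \<le> complexity n E" using Max_ge[OF fin] by (metis le_trans)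
  show "complexity n E \<le> (n + 1) * card {B. B \<subseteq> {..<n} \<and> card B \<le> card D}"
    if "dominating n E D"
    unfolding \<open>complexity n E = Max L\<close>
    by (rule Max.boundedI[OF fin]) (use \<open>length xs \<in> L\<close> le[OF _ that] in auto)
qed


section \<open>Expectations over the random graph\<close>

lemma finite_all_pairs: "finite (all_pairs n)"
proof -
  have "all_pairs n \<subseteq> (\<lambda>(i, j). {i, j}) ` ({..<n} \<times> {..<n})" unfolding all_pairs_def by auto
  then show ?thesis by (rule finite_subset) simp
qed

lemma sum_Pow_power_card:
  fixes y :: "'a::comm_semiring_1"
  assumes "finite A"
  shows "(\<Sum>B\<in>Pow A. y ^ card B) = (1 + y) ^ card A"
  using prod_add[OF assms, of "\<lambda>_. y" "\<lambda>_. 1"] by (simp add: add.commute)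

lemma card_small_subsets_le:
  assumes "0 < x" "x \<le> (1::real)"
  shows "real (card {B. B \<subseteq> {..<n} \<and> card B \<le> k}) \<le> (1 + x) ^ n * (1 / x) ^ k"
proof -
  define BS where "BS = {B. B \<subseteq> {..<n} \<and> card B \<le> k}"
  have "real (card BS) * x ^ k = (\<Sum>B\<in>BS. x ^ k)" by simp
  also have "\<dots> \<le> (\<Sum>B\<in>BS. x ^ card B)"
    by (intro sum_mono power_decreasing) (use assms in \<open>auto simp: BS_def\<close>)
  also have "\<dots> \<le> (\<Sum>B\<in>Pow {..<n}. x ^ card B)"
    by (intro sum_mono2) (use assms in \<open>auto simp: BS_def\<close>)
  also have "\<dots> = (1 + x) ^ n" using sum_Pow_power_card[of "{..<n}" x] by simp
  finally show ?thesis
    unfolding BS_def using assms by (simp add: field_simps power_one_over)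
qed

definition gnp_mean :: "nat \<Rightarrow> real \<Rightarrow> (nat set set \<Rightarrow> real) \<Rightarrow> real" where
  "gnp_mean n p f = (\<Sum>E\<in>Pow (all_pairs n).
      p ^ card E * (1 - p) ^ (card (all_pairs n) - card E) * f E)"

lemma T_eq_gnp_mean: "T n p = gnp_mean n p (\<lambda>E. real (complexity n E))"
  unfolding T_def gnp_mean_def ..

lemma gnp_mean_mono:
  assumes "0 \<le> p" "p \<le> 1" "\<And>E. f E \<le> g E"
  shows "gnp_mean n p f \<le> gnp_mean n p g"
  unfolding gnp_mean_def using assms by (intro sum_mono mult_left_mono) auto

lemma gnp_mean_cmult: "gnp_mean n p (\<lambda>E. c * f E) = c * gnp_mean n p f"
  unfolding gnp_mean_def by (simp add: sum_distrib_left mult_ac)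

lemma gnp_mean_sum: "gnp_mean n p (\<lambda>E. \<Sum>W\<in>A. f W E) = (\<Sum>W\<in>A. gnp_mean n p (f W))"
  unfolding gnp_mean_def by (simp add: sum_distrib_left sum.swap[of _ _ A])

lemma gnp_mean_avoid:
  assumes "F \<subseteq> all_pairs n"
  shows "gnp_mean n p (\<lambda>E. if E \<inter> F = {} then 1 else 0) = (1 - p) ^ card F"
proof -
  let ?P = "all_pairs n"
  define q where "q e = (if e \<in> F then 0 else p)" for e
  have "gnp_mean n p (\<lambda>E. if E \<inter> F = {} then 1 else 0) =
      (\<Sum>E\<in>Pow ?P. prod q E * (1 - p) ^ card (?P - E))"
    unfolding gnp_mean_def
  proof (intro sum.cong refl)
    fix E assume "E \<in> Pow ?P"
    then have E: "finite E" "card (?P - E) = card ?P - card E"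
      using finite_all_pairs by (auto simp: card_Diff_subset finite_subset)
    have "prod q E = (if E \<inter> F = {} then p ^ card E else 0)"
    proof (cases "E \<inter> F = {}")
      case True
      then have "prod q E = prod (\<lambda>_. p) E" unfolding q_def by (intro prod.cong) auto
      with True show ?thesis by simp
    qed (use E(1) in \<open>auto simp: q_def intro: prod_zero\<close>)
    then show "p ^ card E * (1 - p) ^ (card ?P - card E) * (if E \<inter> F = {} then 1 else 0) =
        prod q E * (1 - p) ^ card (?P - E)"
      using E(2) by simp
  qed
  also have "\<dots> = (\<Prod>e\<in>?P. q e + (1 - p))"
    using prod_add[OF finite_all_pairs, of q "\<lambda>_. 1 - p"] by simp
  also have "\<dots> = (\<Prod>e\<in>?P. if e \<in> F then 1 - p else 1)"
    unfolding q_def by (intro prod.cong) auto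
  also have "\<dots> = (1 - p) ^ card F"
    using assms finite_all_pairs by (simp add: prod.If_cases Int_absorb1)
  finally show ?thesis .
qed

lemma gnp_mean_one: "gnp_mean n p (\<lambda>_. 1) = 1"
  using gnp_mean_avoid[of "{}" n p] by simp

definition unreached :: "nat \<Rightarrow> nat \<Rightarrow> nat set set \<Rightarrow> nat set" where
  "unreached n m E = {v \<in> {m..<n}. \<forall>u<m. {u, v} \<notin> E}"

definition cross_edges :: "nat \<Rightarrow> nat set \<Rightarrow> nat set set" where
  "cross_edges m W = (\<lambda>(u, v). {u, v}) ` ({..<m} \<times> W)"

lemma dominating_unreached:
  "m \<le> n \<Longrightarrow> dominating n E ({..<m} \<union> unreached n m E)"
  unfolding dominating_def unreached_def by auto

lemma subset_unreached_iff:
  "W \<subseteq> {m..<n} \<Longrightarrow> W \<subseteq> unreached n m E \<longleftrightarrow> E \<inter> cross_edges m W = {}"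
  unfolding unreached_def cross_edges_def by auto

lemma card_cross_edges:
  assumes "W \<subseteq> {m..<n}"
  shows "card (cross_edges m W) = m * card W"
proof -
  have "inj_on (\<lambda>(u, v). {u, v}) ({..<m} \<times> W)"
    using assms by (auto intro!: inj_onI simp: doubleton_eq_iff)
  moreover have "finite W" using assms finite_subset by blast
  ultimately show ?thesis
    unfolding cross_edges_def by (simp add: card_image card_cartesian_product)
qed

lemma cross_edges_subset_all_pairs: "W \<subseteq> {m..<n} \<Longrightarrow> cross_edges m W \<subseteq> all_pairs n"
  unfolding cross_edges_def all_pairs_def by fastforce

lemma gnp_mean_power_card_unreached:
  "gnp_mean n p (\<lambda>E. (1 + y) ^ card (unreached n m E)) = (1 + y * (1 - p) ^ m) ^ (n - m)"
proof -
  let ?M = "{m..<n}"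
  have expand: "(1 + y) ^ card (unreached n m E) =
      (\<Sum>W\<in>Pow ?M. y ^ card W * (if E \<inter> cross_edges m W = {} then 1 else 0))" for E
  proof -
    have U: "unreached n m E \<subseteq> ?M" "finite (unreached n m E)" unfolding unreached_def by auto
    then have "Pow (unreached n m E) = {W \<in> Pow ?M. E \<inter> cross_edges m W = {}}"
      using subset_unreached_iff by blast
    moreover have "(1 + y) ^ card (unreached n m E) = (\<Sum>W\<in>Pow (unreached n m E). y ^ card W)"
      using U(2) by (simp add: sum_Pow_power_card)
    ultimately have "(1 + y) ^ card (unreached n m E) =
        (\<Sum>W\<in>{W \<in> Pow ?M. E \<inter> cross_edges m W = {}}. y ^ card W)"
      by simp
    also have "\<dots> = (\<Sum>W\<in>Pow ?M. if E \<inter> cross_edges m W = {} then y ^ card W else 0)"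
      by (rule sum.inter_filter) simp
    also have "\<dots> = (\<Sum>W\<in>Pow ?M. y ^ card W * (if E \<inter> cross_edges m W = {} then 1 else 0))"
      by (intro sum.cong) auto
    finally show ?thesis .
  qed
  have "gnp_mean n p (\<lambda>E. (1 + y) ^ card (unreached n m E)) =
      (\<Sum>W\<in>Pow ?M. y ^ card W * (1 - p) ^ card (cross_edges m W))"
    unfolding expand gnp_mean_sum gnp_mean_cmult
    by (simp add: gnp_mean_avoid cross_edges_subset_all_pairs)
  also have "\<dots> = (\<Sum>W\<in>Pow ?M. (y * (1 - p) ^ m) ^ card W)"
    by (intro sum.cong refl) (simp add: card_cross_edges power_mult power_mult_distrib)
  also have "\<dots> = (1 + y * (1 - p) ^ m) ^ (n - m)"
    by (simp add: sum_Pow_power_card)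
  finally show ?thesis .
qed

lemma complexity_le_unreached:
  assumes x: "0 < x" "x \<le> 1" and "m \<le> n"
  shows "real (complexity n E) \<le>
    (real n + 1) * (1 + x) ^ n * (1 / x) ^ m * (1 / x) ^ card (unreached n m E)"
proof -
  let ?D = "{..<m} \<union> unreached n m E"
  have "real (complexity n E) \<le> real ((n + 1) * card {B. B \<subseteq> {..<n} \<and> card B \<le> card ?D})"
    using complexity_le[OF dominating_unreached[OF \<open>m \<le> n\<close>]] by (simp only: of_nat_le_iff)
  also have "\<dots> = (real n + 1) * real (card {B. B \<subseteq> {..<n} \<and> card B \<le> card ?D})"
    by (simp add: algebra_simps)
  also have "\<dots> \<le> (real n + 1) * ((1 + x) ^ n * (1 / x) ^ card ?D)"
    by (intro mult_left_mono card_small_subsets_le x) simp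
  also have "\<dots> \<le> (real n + 1) * ((1 + x) ^ n * (1 / x) ^ (m + card (unreached n m E)))"
    using card_Un_le[of "{..<m}" "unreached n m E"] x
    by (intro mult_left_mono power_increasing) simp_all
  finally show ?thesis by (simp add: power_add mult_ac)
qed

lemma T_le:
  assumes p: "0 \<le> p" "p \<le> 1" and x: "0 < x" "x \<le> 1" and "m \<le> n"
  shows "T n p \<le> (real n + 1) * (1 + x) ^ n * (1 / x) ^ m *
    (1 + (1 / x - 1) * (1 - p) ^ m) ^ (n - m)"
proof -
  let ?C = "(real n + 1) * (1 + x) ^ n * (1 / x) ^ m"
  have "T n p \<le> gnp_mean n p (\<lambda>E. ?C * (1 + (1 / x - 1)) ^ card (unreached n m E))"
    unfolding T_eq_gnp_mean
    using complexity_le_unreached[OF x \<open>m \<le> n\<close>] by (intro gnp_mean_mono p) simp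
  also have "\<dots> = ?C * (1 + (1 / x - 1) * (1 - p) ^ m) ^ (n - m)"
    by (simp only: gnp_mean_cmult gnp_mean_power_card_unreached)
  finally show ?thesis .
qed

lemma T_ge_one:
  assumes "0 \<le> p" "p \<le> 1"
  shows "1 \<le> T n p"
proof -
  have "1 = gnp_mean n p (\<lambda>_. 1)" by (simp add: gnp_mean_one)
  also have "\<dots> \<le> T n p"
    unfolding T_eq_gnp_mean using complexity_ge_one by (intro gnp_mean_mono assms) simp
  finally show ?thesis .
qed

lemma one_minus_power_le_exp:
  assumes "p \<le> (1::real)"
  shows "(1 - p) ^ m \<le> exp (- (p * real m))"
proof -
  have "(1 - p) ^ m \<le> exp (- p) ^ m"
    using assms exp_ge_add_one_self[of "- p"] by (intro power_mono) simp_all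
  also have "\<dots> = exp (- (p * real m))" by (simp flip: exp_of_nat_mult)
  finally show ?thesis .
qed

lemma one_plus_power_le_exp:
  assumes "0 \<le> x"
  shows "(1 + x) ^ n \<le> exp (x * real n)"
proof -
  have "(1 + x) ^ n \<le> exp x ^ n"
    using assms exp_ge_add_one_self[of x] by (intro power_mono) simp_all
  also have "\<dots> = exp (x * real n)" by (simp add: mult.commute flip: exp_of_nat_mult)
  finally show ?thesis .
qed

lemma T_le_exp:
  assumes p: "0 \<le> p" "p \<le> 1" and x: "0 < x" "x \<le> 1" and "m \<le> n"
    and m_small: "real m * ln (1 / x) \<le> x * real n"
    and m_large: "2 * ln (1 / x) \<le> p * real m"
  shows "T n p \<le> (real n + 1) * exp (3 * x * real n)"
proof -
  have "(1 - p) ^ m \<le> exp (- (p * real m))" by (rule one_minus_power_le_exp[OF p(2)])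
  also have "\<dots> \<le> exp (- (2 * ln (1 / x)))" using m_large by simp
  also have "\<dots> = x ^ 2" using x exp_of_nat_mult[of 2 "ln x"] by (simp add: ln_div)
  finally have "(1 / x - 1) * (1 - p) ^ m \<le> 1 / x * x ^ 2"
    using x p by (intro mult_mono) simp_all
  then have "(1 + (1 / x - 1) * (1 - p) ^ m) ^ (n - m) \<le> (1 + x) ^ n"
    using x p by (intro order.trans[OF power_mono power_increasing])
      (simp_all add: power2_eq_square)
  also have exp_bound: "(1 + x) ^ n \<le> exp (x * real n)" using x by (simp add: one_plus_power_le_exp)
  finally have last_factor: "(1 + (1 / x - 1) * (1 - p) ^ m) ^ (n - m) \<le> exp (x * real n)" .
  have "(1 / x) ^ m = exp (real m * ln (1 / x))" using x by (simp add: exp_of_nat_mult)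
  then have middle_factor: "(1 / x) ^ m \<le> exp (x * real n)" using m_small by simp
  have "0 \<le> 1 + (1 / x - 1) * (1 - p) ^ m" using x p by simp
  then have "T n p \<le> (real n + 1) * exp (x * real n) * exp (x * real n) * exp (x * real n)"
    using T_le[OF p x \<open>m \<le> n\<close>] exp_bound middle_factor last_factor x
    by (elim order.trans) (intro mult_mono order.refl; simp)
  also have "\<dots> = (real n + 1) * exp (3 * x * real n)" by (simp flip: exp_add)
  finally show ?thesis .
qed


section \<open>The two regimes\<close>

lemma T_le_exp_if_np_large:
  assumes p: "0 \<le> p" "p \<le> 1" and x: "0 < x" "x \<le> 1/2"
    and np: "(2 * ln (1 / x) + 1) * ln (1 / x) / x \<le> real n * p"
  shows "T n p \<le> (real n + 1) * exp (3 * x * real n)"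
proof -
  define L where "L = ln (1 / x)"
  have "1 - x \<le> L" using ln_le_minus_one[OF x(1)] x(1) unfolding L_def by (simp add: ln_div)
  then have L: "1/2 \<le> L" using x by linarith
  define \<beta> where "\<beta> = x / L"
  have \<beta>: "0 < \<beta>" "\<beta> \<le> 1" "\<beta> * L = x"
    using x L unfolding \<beta>_def by (simp_all add: divide_le_eq)
  define m where "m = nat \<lfloor>\<beta> * real n\<rfloor>"
  have "0 \<le> \<beta> * real n" using \<beta>(1) by simp
  then have m: "real m \<le> \<beta> * real n" "\<beta> * real n - 1 \<le> real m"
    unfolding m_def by linarith+
  have "\<beta> * real n \<le> real n" using mult_right_mono[OF \<beta>(2), of "real n"] by simp
  with m(1) have "m \<le> n" by linarith
  moreover have "real m * L \<le> x * real n"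
  proof -
    have "real m * L \<le> \<beta> * real n * L" using m(1) L by (intro mult_right_mono) simp_all
    then show ?thesis by (simp add: \<beta>(3)[symmetric] mult_ac)
  qed
  moreover have "2 * L \<le> p * real m"
  proof -
    have "2 * L + 1 = (2 * L + 1) * L / x * \<beta>" using x L unfolding \<beta>_def by simp
    also have "\<dots> \<le> real n * p * \<beta>"
      using np \<beta>(1) unfolding L_def by (intro mult_right_mono) simp_all
    finally have "2 * L + 1 \<le> \<beta> * (real n * p)" by (simp only: mult_ac)
    moreover have "p * (\<beta> * real n - 1) \<le> p * real m" using m(2) p(1) by (rule mult_left_mono)
    ultimately show ?thesis using p by (simp add: algebra_simps)
  qed
  ultimately show ?thesis using T_le_exp[OF p x(1)] x(2) unfolding L_def by simp
qed

lemma T_subexponential: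
  assumes p: "\<forall>n. 0 \<le> p n \<and> p n \<le> 1"
    and np: "filterlim (\<lambda>n. real n * p n) at_top sequentially"
  shows "(\<lambda>n. log 2 (T n (p n))) \<in> o(\<lambda>n. real n)"
proof (rule landau_o.smallI)
  fix \<epsilon> :: real assume "0 < \<epsilon>"
  define x where "x = min (1/2) (\<epsilon> * ln 2 / 4)"
  have x: "0 < x" "x \<le> 1/2" "4 * x \<le> \<epsilon> * ln 2" using \<open>0 < \<epsilon>\<close> unfolding x_def by auto
  have "(\<lambda>n. ln (real n + 1)) \<in> o(\<lambda>n. real n)" by real_asymp
  from landau_o.smallD[OF this x(1)]
  have "\<forall>\<^sub>F n in sequentially. ln (real n + 1) \<le> x * real n" by (rule eventually_mono) simp
  moreover have "\<forall>\<^sub>F n in sequentially. (2 * ln (1 / x) + 1) * ln (1 / x) / x \<le> real n * p n"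
    using np unfolding filterlim_at_top by blast
  ultimately show "\<forall>\<^sub>F n in sequentially. norm (log 2 (T n (p n))) \<le> \<epsilon> * norm (real n)"
  proof eventually_elim
    case (elim n)
    have T: "1 \<le> T n (p n)" using T_ge_one p by blast
    have "real n + 1 = exp (ln (real n + 1))" by simp
    also have "\<dots> \<le> exp (x * real n)" by (subst exp_le_cancel_iff) (rule elim(1))
    finally have n1: "real n + 1 \<le> exp (x * real n)" .
    have "T n (p n) \<le> (real n + 1) * exp (3 * x * real n)"
      using T_le_exp_if_np_large p x elim(2) by blast
    also have "\<dots> \<le> exp (x * real n) * exp (3 * x * real n)"
      using n1 by (intro mult_right_mono) simp_all
    also have "\<dots> = exp (4 * x * real n)" by (simp flip: exp_add)
    finally have "ln (T n (p n)) \<le> 4 * x * real n"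
      using T by (metis ln_exp ln_le_cancel_iff exp_gt_zero less_le_trans zero_less_one)
    also have "\<dots> \<le> \<epsilon> * ln 2 * real n" using x(3) by (intro mult_right_mono) simp_all
    finally show ?case using T by (simp add: log_def field_simps)
  qed
qed

lemma exp_minus_four_le: "exp (- 4 :: real) \<le> 1 / 25"
proof -
  have "5 \<le> exp (2 :: real)" using exp_lower_Taylor_quadratic[of 2] by simp
  then have "5 * 5 \<le> exp (2 :: real) * exp 2" by (intro mult_mono) simp_all
  then show ?thesis by (simp add: exp_minus field_simps flip: exp_add)
qed

lemma T_sparse_le:
  assumes c: "20 \<le> c" "c \<le> real n"
  shows "T n (c / real n) \<le> (real n + 1) * (33/25) ^ 4 * (231/125) ^ n"
proof -
  define p where "p = c / real n"
  define m where "m = (n + 4) div 5"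
  have p: "0 \<le> p" "p \<le> 1" unfolding p_def using c by simp_all
  have "m \<le> n" "real n \<le> 5 * real m" unfolding m_def using c by linarith+
  have "T n p \<le> (real n + 1) * (5/4) ^ n * 4 ^ m * (1 + 3 * (1 - p) ^ m) ^ (n - m)"
    using T_le[OF p _ _ \<open>m \<le> n\<close>, of "1/4"] by simp
  also have "\<dots> \<le> (real n + 1) * (5/4) ^ n * ((33/25) ^ 4 * (33/25) ^ n) * (28/25) ^ n"
  proof (intro mult_mono order.refl)
    \<comment> \<open>\<open>4 \<le> (33/25)^5\<close> and \<open>5 m \<le> n + 4\<close>\<close>
    have "(4::real) ^ m \<le> ((33/25) ^ 5) ^ m" by (intro power_mono) (simp_all add: power_divide)
    also have "\<dots> \<le> (33/25) ^ (n + 4)"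
      unfolding power_mult[symmetric] by (intro power_increasing) (simp_all add: m_def)
    finally show "(4::real) ^ m \<le> (33/25) ^ 4 * (33/25) ^ n" by (metis mult.commute power_add)
    have "20 * real m \<le> c * real m" using c(1) by (intro mult_right_mono) simp_all
    then have "4 * real n \<le> c * real m" using \<open>real n \<le> 5 * real m\<close> by linarith
    then have "4 \<le> p * real m" using c unfolding p_def by (simp add: field_simps)
    then have "exp (- (p * real m)) \<le> exp (- 4)" by simp
    then have "(1 - p) ^ m \<le> 1 / 25"
      using one_minus_power_le_exp[OF p(2), of m] exp_minus_four_le by linarith
    then have "(1 + 3 * (1 - p) ^ m) ^ (n - m) \<le> (28/25) ^ (n - m)"
      using p by (intro power_mono) simp_all
    also have "\<dots> \<le> (28/25) ^ n" by (intro power_increasing) simp_all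
    finally show "(1 + 3 * (1 - p) ^ m) ^ (n - m) \<le> (28/25) ^ n" .
  qed (use p in simp_all)
  also have "\<dots> = (real n + 1) * (33/25) ^ 4 * (231/125) ^ n"
    by (simp add: power_mult_distrib[symmetric] mult_ac)
  finally show ?thesis unfolding p_def .
qed

theorem theorem1:
  shows "(\<forall>p :: nat \<Rightarrow> real. (\<forall>n. 0 \<le> p n \<and> p n \<le> 1) \<longrightarrow>
            filterlim (\<lambda>n. real n * p n) at_top sequentially \<longrightarrow>
            (\<lambda>n. log 2 (T n (p n))) \<in> o(\<lambda>n. real n))
       \<and> (\<forall>c :: real. c \<ge> 20 \<longrightarrow>
            (\<exists>\<epsilon> :: real. \<epsilon> \<ge> 0.01 \<and>
               (\<forall>\<^sub>F n in sequentially. T n (c / real n) \<le> (2 - \<epsilon>) ^ n)))"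
proof (intro conjI allI impI)
  fix p :: "nat \<Rightarrow> real"
  assume "\<forall>n. 0 \<le> p n \<and> p n \<le> 1" "filterlim (\<lambda>n. real n * p n) at_top sequentially"
  then show "(\<lambda>n. log 2 (T n (p n))) \<in> o(\<lambda>n. real n)" by (rule T_subexponential)
next
  fix c :: real assume "20 \<le> c"
  have "\<forall>\<^sub>F n in sequentially. c \<le> real n" by real_asymp
  moreover have "\<forall>\<^sub>F n in sequentially. (real n + 1) * (33/25) ^ 4 * (231/125) ^ n \<le> (2 - 0.01) ^ n"
    by real_asymp
  ultimately have "\<forall>\<^sub>F n in sequentially. T n (c / real n) \<le> (2 - 0.01) ^ n"
    by eventually_elim (use T_sparse_le \<open>20 \<le> c\<close> in \<open>blast intro: order.trans\<close>)
  then show "\<exists>\<epsilon> :: real. \<epsilon> \<ge> 0.01 \<and> (\<forall>\<^sub>F n in sequentially. T n (c / real n) \<le> (2 - \<epsilon>) ^ n)"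
    by blast
qed

end
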